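(* Consider the following online reputation model. A random state $x\in\mathbb X=\{1,\dots,X\}$ has prior $\pi_0$ with $\pi_0(i)>0$ for all $i$. Nodes $n=1,2,\dots$ (node $n$ represents agent $s$ at time $k$ via $n=s+S(k-1)$, $s\in\{1,\dots,S\}$) act in increasing order of $n$. Information flow is given by a directed acyclic graph on $\{1,2,\dots\}$ whose edges $(m,n)$ all satisfy $m<n$; $A_n$ is its $n\times n$ adjacency matrix restricted to nodes $1,\dots,n$, with $A_n(m,n')=1$ iff there is an edge from $m$ to $n'$ (so $A_n$ is strictly upper triangular), and $T_n=\operatorname{sgn}((I_n-A_n)^{-1})$ is its transitive closure matrix ($\operatorname{sgn}$ applied entrywise: $0\mapsto0$, nonzero $\mapsto1$). Let $\mathcal F_n=\{m<n: T_n(m,n)=1\}$ (nodes with a directed path to $n$). Private observations $y_1,y_2,\dots\in\mathbb Y=\{1,\dots,Y\}$ are conditionally i.i.d. given $x$ with $P(y_n=y\mid x=i)=B_{iy}>0$. Node $n$ proceeds as follows: it is given a prior (recommendation) belief $\pi_{n-}$; it computes $\eta_n=B_{y_n}\pi_{n-}/(\mathbf 1_X'B_{y_n}\pi_{n-})$ with $B_y=\operatorname{diag}(B_{1y},\dots,B_{Xy})$; it takes the action $a_n=a(\pi_{n-},y_n):=\arg\min_{a\in\mathcal A}c_a'\eta_n$ (fixed deterministic tie-breaking, given cost vectors $c_a$, $\mathcal A=\{1,\dots,A\}$); and the administrator computes the public belief $\pi_n(i)\propto P(a_n\mid x=i,\pi_{n-})\,\pi_{n-}(i)$, where $P(a\mid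 x=i,\pi)=\sum_{y}\mathbf 1\{a(\pi,y)=a\}B_{iy}$. Define $l_m(i)=\log\pi_m(i)-\log\pi_0(i)$. Suppose that for every $n$ the recommendation belief is computed by $$\log\pi_{n-}(i)=\log\pi_0(i)+\sum_{m=1}^{n-1}w_n(m)\,l_m(i)+\text{const}_n,\qquad w_n=T_{n-1}^{-1}t_n,$$ where $\text{const}_n$ does not depend on $i$ (it is fixed by normalization), $T_{n-1}$ is the upper-left $(n-1)\times(n-1)$ block of $T_n$ and $t_n\in\{0,1\}^{n-1}$ consists of the first $n-1$ entries of the $n$-th column of $T_n$ (for $n=1$ the sum is empty and $\pi_{1-}=\pi_0$). Then for every $n$ and $i\in\mathbb X$, $$\pi_{n-}(i)=\pi^0_{n-}(i):=P\big(x=i\mid \{a_m: m\in\mathcal F_n\}\big),$$ i.e. the recommendation equals the fair (incest-free) rating; consequently $\eta_n(i)=P(x=i\mid\{a_m:m\in\mathcal F_n\},y_n)$ and $\pi_n(i)=P(x=i\mid\{a_m:m\in\mathcal F_n\},a_n)$.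
   Context: Here $\pi^0_{n-}$ is called the fair online rating available to node $n$: it is the posterior of $x$ given exactly the actions of all nodes whose information eventually reaches node $n$ through the graph. $T_n$ has ones on the diagonal and $T_{n-1}$ is unit upper triangular, hence invertible. $\mathbf 1_X$ is the all-ones vector. *)

theory Defs
  imports Complex_Main "Jordan_Normal_Form.Matrix"
begin

(* Conventions: states x in {0..<X}, observations y in {0..<Y}, actions in {0..<A}
   (0-based relabelling of the paper's 1-based index sets); nodes n = 1,2,... are 1-based.
   B i y = P(y_n = y | x = i); c a i = i-th entry of cost vector c_a. *)

definition normalize :: "nat \<Rightarrow> (nat \<Rightarrow> real) \<Rightarrow> (nat \<Rightarrow> real)" where
  "normalize X v = (\<lambda>i. v i / (\<Sum>j<X. v j))"

definition eta :: "nat \<Rightarrow> (nat \<Rightarrow> nat \<Rightarrow> real) \<Rightarrow> (nat \<Rightarrow> real) \<Rightarrow> nat \<Rightarrow> (nat \<Rightarrow> real)" where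
  "eta X B p y = normalize X (\<lambda>i. B i y * p i)"

definition act_prob :: "nat \<Rightarrow> nat \<Rightarrow> (nat \<Rightarrow> nat \<Rightarrow> real) \<Rightarrow> ((nat \<Rightarrow> real) \<Rightarrow> nat)
    \<Rightarrow> (nat \<Rightarrow> real) \<Rightarrow> nat \<Rightarrow> nat \<Rightarrow> real" where
  "act_prob X Y B act p a i = (\<Sum>y<Y. if act (eta X B p y) = a then B i y else 0)"

definition pub_update :: "nat \<Rightarrow> nat \<Rightarrow> (nat \<Rightarrow> nat \<Rightarrow> real) \<Rightarrow> ((nat \<Rightarrow> real) \<Rightarrow> nat)
    \<Rightarrow> (nat \<Rightarrow> real) \<Rightarrow> nat \<Rightarrow> (nat \<Rightarrow> real)" where
  "pub_update X Y B act p a = normalize X (\<lambda>i. act_prob X Y B act p a i * p i)"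

text \<open>Adjacency matrix A_n (matrix index i corresponds to node i+1)\<close>
definition adj_mat :: "(nat \<Rightarrow> nat \<Rightarrow> bool) \<Rightarrow> nat \<Rightarrow> real mat" where
  "adj_mat E n = mat n n (\<lambda>(i, j). if E (Suc i) (Suc j) then 1 else 0)"

definition mat_inv :: "real mat \<Rightarrow> real mat" where
  "mat_inv M = (SOME N. inverts_mat M N \<and> inverts_mat N M)"

definition tc_mat :: "(nat \<Rightarrow> nat \<Rightarrow> bool) \<Rightarrow> nat \<Rightarrow> real mat" where
  "tc_mat E n = map_mat sgn (mat_inv (1\<^sub>m n - adj_mat E n))"

text \<open>w_n = T_{n-1}^{-1} t_n, with T_{n-1} the upper-left block of T_n and t_n the first
  n-1 entries of the n-th column of T_n. Entry w_n(m) is (weights E n) $ (m-1).\<close>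
definition weights :: "(nat \<Rightarrow> nat \<Rightarrow> bool) \<Rightarrow> nat \<Rightarrow> real vec" where
  "weights E n = (let T = tc_mat E n;
                      Tm = mat (n - 1) (n - 1) (\<lambda>(i, j). T $$ (i, j));
                      t = vec (n - 1) (\<lambda>i. T $$ (i, n - 1))
                  in mat_inv Tm *\<^sub>v t)"

definition fair_set :: "(nat \<Rightarrow> nat \<Rightarrow> bool) \<Rightarrow> nat \<Rightarrow> nat set" where
  "fair_set E n = {m. 1 \<le> m \<and> m < n \<and> tc_mat E n $$ (m - 1, n - 1) = 1}"

text \<open>Recommendation belief pi_{n-}, given ps = [pi_1, ..., pi_{n-1}]:
  log pi_{n-}(i) = log pi_0(i) + sum_{m=1}^{n-1} w_n(m) l_m(i) + const_n, const_n fixed by normalization.\<close>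
definition rec_belief :: "nat \<Rightarrow> (nat \<Rightarrow> real) \<Rightarrow> (nat \<Rightarrow> nat \<Rightarrow> bool) \<Rightarrow> nat
    \<Rightarrow> (nat \<Rightarrow> real) list \<Rightarrow> (nat \<Rightarrow> real)" where
  "rec_belief X pi0 E n ps = normalize X (\<lambda>i. pi0 i *
      exp (\<Sum>m = 1..<n. weights E n $ (m - 1) * (ln ((ps ! (m - 1)) i) - ln (pi0 i))))"

text \<open>List [pi_1, ..., pi_n] of public beliefs along the observation path ys (ys k = y_k).\<close>
fun pubs :: "nat \<Rightarrow> nat \<Rightarrow> (nat \<Rightarrow> real) \<Rightarrow> (nat \<Rightarrow> nat \<Rightarrow> real) \<Rightarrow> ((nat \<Rightarrow> real) \<Rightarrow> nat)
    \<Rightarrow> (nat \<Rightarrow> nat \<Rightarrow> bool) \<Rightarrow> (nat \<Rightarrow> nat) \<Rightarrow> nat \<Rightarrow> (nat \<Rightarrow> real) list" where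
  "pubs X Y pi0 B act E ys 0 = []"
| "pubs X Y pi0 B act E ys (Suc n) =
     (let ps = pubs X Y pi0 B act E ys n;
          pm = rec_belief X pi0 E (Suc n) ps
      in ps @ [pub_update X Y B act pm (act (eta X B pm (ys (Suc n))))])"

definition prior_belief :: "nat \<Rightarrow> nat \<Rightarrow> (nat \<Rightarrow> real) \<Rightarrow> (nat \<Rightarrow> nat \<Rightarrow> real) \<Rightarrow> ((nat \<Rightarrow> real) \<Rightarrow> nat)
    \<Rightarrow> (nat \<Rightarrow> nat \<Rightarrow> bool) \<Rightarrow> (nat \<Rightarrow> nat) \<Rightarrow> nat \<Rightarrow> (nat \<Rightarrow> real)" where
  "prior_belief X Y pi0 B act E ys n = rec_belief X pi0 E n (pubs X Y pi0 B act E ys (n - 1))"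

definition post_belief :: "nat \<Rightarrow> nat \<Rightarrow> (nat \<Rightarrow> real) \<Rightarrow> (nat \<Rightarrow> nat \<Rightarrow> real) \<Rightarrow> ((nat \<Rightarrow> real) \<Rightarrow> nat)
    \<Rightarrow> (nat \<Rightarrow> nat \<Rightarrow> bool) \<Rightarrow> (nat \<Rightarrow> nat) \<Rightarrow> nat \<Rightarrow> (nat \<Rightarrow> real)" where
  "post_belief X Y pi0 B act E ys n = eta X B (prior_belief X Y pi0 B act E ys n) (ys n)"

definition action :: "nat \<Rightarrow> nat \<Rightarrow> (nat \<Rightarrow> real) \<Rightarrow> (nat \<Rightarrow> nat \<Rightarrow> real) \<Rightarrow> ((nat \<Rightarrow> real) \<Rightarrow> nat)
    \<Rightarrow> (nat \<Rightarrow> nat \<Rightarrow> bool) \<Rightarrow> (nat \<Rightarrow> nat) \<Rightarrow> nat \<Rightarrow> nat" where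
  "action X Y pi0 B act E ys n = act (post_belief X Y pi0 B act E ys n)"

definition public_belief :: "nat \<Rightarrow> nat \<Rightarrow> (nat \<Rightarrow> real) \<Rightarrow> (nat \<Rightarrow> nat \<Rightarrow> real) \<Rightarrow> ((nat \<Rightarrow> real) \<Rightarrow> nat)
    \<Rightarrow> (nat \<Rightarrow> nat \<Rightarrow> bool) \<Rightarrow> (nat \<Rightarrow> nat) \<Rightarrow> nat \<Rightarrow> (nat \<Rightarrow> real)" where
  "public_belief X Y pi0 B act E ys n = pubs X Y pi0 B act E ys n ! (n - 1)"

text \<open>Conditional probability P(x = i | ev(y_1,...,y_N)) in the model where x ~ pi0 and
  y_1,...,y_N are i.i.d. given x with P(y = y | x = i) = B i y.\<close>
definition cond_prob :: "nat \<Rightarrow> nat \<Rightarrow> (nat \<Rightarrow> real) \<Rightarrow> (nat \<Rightarrow> nat \<Rightarrow> real) \<Rightarrow> nat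
    \<Rightarrow> ((nat \<Rightarrow> nat) \<Rightarrow> bool) \<Rightarrow> nat \<Rightarrow> real" where
  "cond_prob X Y pi0 B N ev i =
     (\<Sum>zs \<in> PiE {1..N} (\<lambda>_. {..<Y}). if ev zs then pi0 i * (\<Prod>k = 1..N. B i (zs k)) else 0)
     / (\<Sum>j<X. \<Sum>zs \<in> PiE {1..N} (\<lambda>_. {..<Y}). if ev zs then pi0 j * (\<Prod>k = 1..N. B j (zs k)) else 0)"

end

theory Submission
  imports Defs "Jordan_Normal_Form.Determinant"
begin

text \<open>
  The recommendation of node n is the fair rating because of two independent facts.

  (1) Log-linear side. The weights w_n = T_{n-1}^{-1} t_n solve
  sum_k T(m,k) w_n(k) = T(m,n): summed against w_n, every node m counts once if it
  reaches n and not at all otherwise. If every earlier public belief is the fair one,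
  then l_k(i) = sum of log P(a_m | x = i, pi_{m-}) over the nodes m reaching k
  (k included), up to a constant; so the weighted sum of the l_k is the sum of these
  log-likelihoods over F_n, up to a constant, and pi_{n-} is proportional to
  pi_0(i) * prod_{m in F_n} P(a_m | x = i, pi_{m-}).

  (2) Probabilistic side. Summing the joint law of (x, y_1, ..., y_N) over the
  observation paths whose actions agree on a set S of nodes closed under F gives
  exactly pi_0(i) * prod_{m in S} P(a_m | x = i, pi_{m-}): peel off the last
  observation, whose node sees the same recommendation on every agreeing path.
\<close>

text \<open>A unit upper triangular matrix has determinant 1, so the choice operator in
  \<open>mat_inv\<close> really picks its two-sided inverse.\<close>
lemma mat_inv_unit_upper_triangular:
  fixes M :: "real mat"
  assumes M: "M \<in> carrier_mat n n" and ut: "upper_triangular M"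
    and diag: "\<And>i. i < n \<Longrightarrow> M $$ (i, i) = 1"
  shows "mat_inv M \<in> carrier_mat n n" "M * mat_inv M = 1\<^sub>m n" "mat_inv M * M = 1\<^sub>m n"
proof -
  have "det M = 1"
    using det_upper_triangular[OF ut M] M diag by (simp add: prod_list_diag_prod)
  then have "M \<in> Units (ring_mat TYPE(real) n ())"
    using det_non_zero_imp_unit[OF M] by simp
  then obtain N where N: "N \<in> carrier_mat n n" "N * M = 1\<^sub>m n" "M * N = 1\<^sub>m n"
    unfolding Units_def ring_mat_simps by auto
  then have "\<exists>N. inverts_mat M N \<and> inverts_mat N M"
    using M unfolding inverts_mat_def by auto
  then have K: "inverts_mat M (mat_inv M) \<and> inverts_mat (mat_inv M) M"
    unfolding mat_inv_def by (rule someI_ex)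
  then have right: "M * mat_inv M = 1\<^sub>m n"
    using M unfolding inverts_mat_def by auto
  then have "dim_col (mat_inv M) = n"
    by (metis index_mult_mat(3) index_one_mat(3))
  moreover have left: "mat_inv M * M = 1\<^sub>m (dim_row (mat_inv M))"
    using K unfolding inverts_mat_def by auto
  moreover have "dim_row (mat_inv M) = n"
    using left M by (metis carrier_matD(2) index_mult_mat(3) index_one_mat(3))
  ultimately show "mat_inv M \<in> carrier_mat n n" "M * mat_inv M = 1\<^sub>m n" "mat_inv M * M = 1\<^sub>m n"
    using right by auto
qed

section \<open>The transitive closure matrix is reachability\<close>

lemma reach_le:
  fixes E :: "'a::preorder \<Rightarrow> 'a \<Rightarrow> bool"
  assumes dag: "\<And>m n. E m n \<Longrightarrow> m < n"
  shows "E\<^sup>*\<^sup>* a b \<Longrightarrow> a \<le> b"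
  by (induction rule: rtranclp_induct) (auto dest!: dag intro: order_trans less_imp_le)

lemma id_minus_adj_carrier: "1\<^sub>m n - Defs.adj_mat E n \<in> carrier_mat n n"
  unfolding Defs.adj_mat_def by auto

lemma id_minus_adj_index:
  "i < n \<Longrightarrow> j < n \<Longrightarrow> (1\<^sub>m n - Defs.adj_mat E n) $$ (i, j) =
     (if i = j then 1 else 0) - (if E (Suc i) (Suc j) then 1 else 0)"
  unfolding Defs.adj_mat_def by auto

definition path_mat :: "(nat \<Rightarrow> nat \<Rightarrow> bool) \<Rightarrow> nat \<Rightarrow> real mat" where
  "path_mat E n = mat_inv (1\<^sub>m n - Defs.adj_mat E n)"

lemma sum_shift_from_1: "(\<Sum>k = 1..<n. g k) = (\<Sum>k<n - 1. g (Suc k))"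
  unfolding sum.atLeastLessThan_shift_0[of _ 1] atLeast0LessThan by (simp add: comp_def)

text \<open>The information graph: every edge goes from an earlier to a later node. In the
  matrices A_n, T_n the (0-based) index k stands for node Suc k.\<close>
locale increasing_dag =
  fixes E :: "nat \<Rightarrow> nat \<Rightarrow> bool"
  assumes dag: "\<And>m n. E m n \<Longrightarrow> m < n"
begin

lemma reach_last_edge:
  "E\<^sup>*\<^sup>* (Suc k) (Suc l) \<longleftrightarrow>
           k = l \<or> (\<exists>p<l. E\<^sup>*\<^sup>* (Suc k) (Suc p) \<and> E (Suc p) (Suc l))"
proof
  assume "E\<^sup>*\<^sup>* (Suc k) (Suc l)"
  then show "k = l \<or> (\<exists>p<l. E\<^sup>*\<^sup>* (Suc k) (Suc p) \<and> E (Suc p) (Suc l))"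
  proof (cases rule: rtranclp.cases)
    case (rtrancl_into_rtrancl c)
    have "Suc k \<le> c" using reach_le[where E = E, OF dag rtrancl_into_rtrancl(1)] .
    then obtain p where "c = Suc p" by (cases c) auto
    with rtrancl_into_rtrancl dag show ?thesis by fastforce
  qed simp
qed (auto intro: rtranclp.rtrancl_into_rtrancl)

text \<open>For a DAG, I - A_n is unit upper triangular, hence \<open>path_mat\<close> is its inverse.\<close>
lemma path_mat_inverse:
  shows "path_mat E n \<in> carrier_mat n n"
    and "path_mat E n * (1\<^sub>m n - Defs.adj_mat E n) = 1\<^sub>m n"
proof -
  have "upper_triangular (1\<^sub>m n - Defs.adj_mat E n)"
  proof (rule upper_triangularI)
    fix i j assume "j < i" and "i < dim_row (1\<^sub>m n - Defs.adj_mat E n)"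
    then show "(1\<^sub>m n - Defs.adj_mat E n) $$ (i, j) = 0"
      using dag[of "Suc i" "Suc j"] by (auto simp: id_minus_adj_index Defs.adj_mat_def)
  qed
  moreover have "(1\<^sub>m n - Defs.adj_mat E n) $$ (i, i) = 1" if "i < n" for i
    using that dag[of "Suc i" "Suc i"] by (auto simp: id_minus_adj_index)
  ultimately show "path_mat E n \<in> carrier_mat n n"
    and "path_mat E n * (1\<^sub>m n - Defs.adj_mat E n) = 1\<^sub>m n"
    unfolding path_mat_def using mat_inv_unit_upper_triangular[OF id_minus_adj_carrier] by blast+
qed

text \<open>Reading N (I - A) = I column by column: N(k,l) = [k = l] + sum of N(k,p) over
  the edges p -> l. This recursion computes path counts.\<close>
lemma path_mat_recursion:
  assumes k: "k < n" and l: "l < n"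
  shows "path_mat E n $$ (k, l) = (if k = l then 1 else 0)
           + (\<Sum>p<n. if E (Suc p) (Suc l) then path_mat E n $$ (k, p) else 0)"
proof -
  let ?N = "path_mat E n" and ?M = "1\<^sub>m n - Defs.adj_mat E n"
  have N: "?N \<in> carrier_mat n n" "?N * ?M = 1\<^sub>m n"
    using path_mat_inverse by auto
  have "(if k = l then 1 else 0) = (?N * ?M) $$ (k, l)"
    using N k l by simp
  also have "\<dots> = (\<Sum>p<n. ?N $$ (k, p) * ?M $$ (p, l))"
    using N(1) k l id_minus_adj_carrier[of n E]
    by (subst index_mult_mat) (auto simp: scalar_prod_def Defs.adj_mat_def atLeast0LessThan intro!: sum.cong)
  also have "\<dots> = (\<Sum>p<n. (if p = l then ?N $$ (k, p) else 0)
                          - (if E (Suc p) (Suc l) then ?N $$ (k, p) else 0))"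
    using l by (intro sum.cong) (auto simp: id_minus_adj_index)
  also have "\<dots> = ?N $$ (k, l) - (\<Sum>p<n. if E (Suc p) (Suc l) then ?N $$ (k, p) else 0)"
    using l by (simp add: sum_subtractf)
  finally show ?thesis by simp
qed

lemma path_mat_reach:
  assumes "l < n" and "k < n"
  shows "0 \<le> path_mat E n $$ (k, l) \<and> (0 < path_mat E n $$ (k, l) \<longleftrightarrow> E\<^sup>*\<^sup>* (Suc k) (Suc l))"
  using assms
proof (induction l arbitrary: k rule: less_induct)
  case (less l)
  define f where "f p = (if E (Suc p) (Suc l) then path_mat E n $$ (k, p) else 0)" for p
  have edge_lt: "E (Suc p) (Suc l) \<Longrightarrow> p < l" for p
    using dag by fastforce
  have f_nonneg: "0 \<le> f p" if "p < n" for p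
    using less.IH[of p k] less.prems edge_lt that unfolding f_def by auto
  have "0 < sum f {..<n} \<longleftrightarrow> (\<exists>p<n. 0 < f p)"
    using f_nonneg sum_nonneg_eq_0_iff[of "{..<n}" f] sum_nonneg[of "{..<n}" f]
    by (fastforce simp: order_less_le)
  also have "\<dots> \<longleftrightarrow> (\<exists>p<l. E\<^sup>*\<^sup>* (Suc k) (Suc p) \<and> E (Suc p) (Suc l))"
  proof
    assume "\<exists>p<n. 0 < f p"
    then obtain p where p: "p < n" "0 < f p" by blast
    then have e: "E (Suc p) (Suc l)" by (auto simp: f_def split: if_splits)
    then show "\<exists>p<l. E\<^sup>*\<^sup>* (Suc k) (Suc p) \<and> E (Suc p) (Suc l)"
      using less.IH[of p k] less.prems edge_lt[OF e] p unfolding f_def by auto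
  next
    assume "\<exists>p<l. E\<^sup>*\<^sup>* (Suc k) (Suc p) \<and> E (Suc p) (Suc l)"
    then obtain p where "p < l" "E\<^sup>*\<^sup>* (Suc k) (Suc p)" "E (Suc p) (Suc l)" by blast
    then show "\<exists>p<n. 0 < f p"
      using less.IH[of p k] less.prems unfolding f_def by (intro exI[of _ p]) auto
  qed
  finally have "0 < sum f {..<n} \<longleftrightarrow> (\<exists>p<l. E\<^sup>*\<^sup>* (Suc k) (Suc p) \<and> E (Suc p) (Suc l))" .
  moreover have "path_mat E n $$ (k, l) = (if k = l then 1 else 0) + sum f {..<n}"
    unfolding f_def by (rule path_mat_recursion[OF less.prems(2,1)])
  moreover have "0 \<le> sum f {..<n}"
    using f_nonneg by (auto intro: sum_nonneg)
  ultimately show ?case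
    using reach_last_edge[of k l] by auto
qed

lemma tc_mat_reach:
  assumes "k < n" and "l < n"
  shows "tc_mat E n $$ (k, l) = (if E\<^sup>*\<^sup>* (Suc k) (Suc l) then 1 else 0)"
proof -
  have "path_mat E n \<in> carrier_mat n n"
    by (rule path_mat_inverse(1))
  then have "tc_mat E n $$ (k, l) = sgn (path_mat E n $$ (k, l))"
    using assms unfolding tc_mat_def path_mat_def by auto
  then show ?thesis
    using path_mat_reach[OF assms(2,1)] by (auto simp: sgn_if)
qed

lemma fair_set_reach:
  "fair_set E n = {m. 1 \<le> m \<and> m < n \<and> E\<^sup>*\<^sup>* m n}"
  unfolding fair_set_def using tc_mat_reach[of "_ - 1" n "n - 1"]
  by (auto simp: Suc_diff_1 split: if_split_asm)

lemma fair_set_subset: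
  "fair_set E n \<subseteq> {1..<n}"
  using fair_set_reach by auto

lemma fair_set_closed:
  assumes "k \<in> fair_set E n"
  shows "fair_set E k \<subseteq> fair_set E n"
  using assms by (auto simp: fair_set_reach)

section \<open>The weights w_n\<close>

lemma weights_equation:
  assumes j: "j < n - 1"
  shows "(\<Sum>k<n - 1. (if E\<^sup>*\<^sup>* (Suc j) (Suc k) then 1 else 0) * weights E n $ k)
           = (if E\<^sup>*\<^sup>* (Suc j) n then 1 else 0)"
proof -
  define T where "T = tc_mat E n"
  define Tm where "Tm = mat (n - 1) (n - 1) (\<lambda>(i, j). T $$ (i, j))"
  define t where "t = vec (n - 1) (\<lambda>i. T $$ (i, n - 1))"
  have Tm: "Tm \<in> carrier_mat (n - 1) (n - 1)" unfolding Tm_def by auto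
  have Tm_index: "Tm $$ (i, l) = (if E\<^sup>*\<^sup>* (Suc i) (Suc l) then 1 else 0)"
    if "i < n - 1" "l < n - 1" for i l
    unfolding Tm_def T_def using that tc_mat_reach by auto
  have "upper_triangular Tm"
    using Tm Tm_index reach_le[where E = E, OF dag] by (fastforce simp: upper_triangular_def)
  then have inv: "mat_inv Tm \<in> carrier_mat (n - 1) (n - 1)" "Tm * mat_inv Tm = 1\<^sub>m (n - 1)"
    using mat_inv_unit_upper_triangular[OF Tm] Tm_index by auto
  have w: "weights E n = mat_inv Tm *\<^sub>v t"
    unfolding weights_def Let_def T_def Tm_def t_def by simp
  have "Tm *\<^sub>v weights E n = t"
    unfolding w using inv Tm
    by (subst assoc_mult_mat_vec[symmetric, of _ "n - 1" "n - 1" _ "n - 1"]) (auto simp: t_def)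
  then have "(Tm *\<^sub>v weights E n) $ j = t $ j" by simp
  moreover have "(Tm *\<^sub>v weights E n) $ j
      = (\<Sum>k<n - 1. (if E\<^sup>*\<^sup>* (Suc j) (Suc k) then 1 else 0) * weights E n $ k)"
    using j Tm inv unfolding w by (auto simp: scalar_prod_def Tm_index atLeast0LessThan intro!: sum.cong)
  moreover have "t $ j = (if E\<^sup>*\<^sup>* (Suc j) n then 1 else 0)"
    unfolding t_def T_def using j tc_mat_reach[of j n "n - 1"] by auto
  ultimately show ?thesis by simp
qed

text \<open>Consequently w_n vanishes on every node that does not reach n (downward
  induction: all terms but the diagonal one in the equation for k already vanish).\<close>
lemma weights_vanish:
  assumes "k < n - 1" and "\<not> E\<^sup>*\<^sup>* (Suc k) n"
  shows "weights E n $ k = 0"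
  using assms
proof (induction "n - 1 - k" arbitrary: k rule: less_induct)
  case less
  let ?f = "\<lambda>l. (if E\<^sup>*\<^sup>* (Suc k) (Suc l) then 1 else 0) * weights E n $ l"
  have others: "?f l = 0" if l: "l \<in> {..<n - 1} - {k}" for l
  proof (cases "E\<^sup>*\<^sup>* (Suc k) (Suc l)")
    case True
    then have "k < l" using reach_le[where E = E, OF dag True] l by auto
    moreover have "\<not> E\<^sup>*\<^sup>* (Suc l) n"
      using True less.prems(2) rtranclp_trans by metis
    ultimately show ?thesis using less.hyps[of l] l by auto
  qed simp
  have "0 = (\<Sum>l<n - 1. ?f l)"
    using weights_equation[OF less.prems(1)] less.prems(2) by simp
  also have "\<dots> = ?f k + (\<Sum>l\<in>{..<n - 1} - {k}. ?f l)"
    using less.prems(1) by (subst sum.remove[of _ k]) auto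
  also have "(\<Sum>l\<in>{..<n - 1} - {k}. ?f l) = 0"
    using others by (intro sum.neutral) blast
  finally show ?case by simp
qed

lemma weights_count_fair_set_once:
  fixes a :: "nat \<Rightarrow> real"
  shows "(\<Sum>k = 1..<n. weights E n $ (k - 1) * (\<Sum>m\<in>insert k (fair_set E k). a m))
           = (\<Sum>m\<in>fair_set E n. a m)"
proof -
  let ?r = "\<lambda>m k. if E\<^sup>*\<^sup>* m k then 1 else 0 :: real"
  let ?w = "\<lambda>k. weights E n $ (k - 1)"
  have ancestors: "insert k (fair_set E k) = {m \<in> {1..<n}. E\<^sup>*\<^sup>* m k}" if "k \<in> {1..<n}" for k
    using that reach_le[where E = E, OF dag] by (force simp: fair_set_reach)
  have ancestors_sum: "(\<Sum>m\<in>insert k (fair_set E k). a m) = (\<Sum>m = 1..<n. ?r m k * a m)"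
    if "k \<in> {1..<n}" for k
    unfolding ancestors[OF that] sum.inter_filter[OF finite_atLeastLessThan]
    by (intro sum.cong) auto
  have column: "(\<Sum>k = 1..<n. ?r m k * ?w k) = ?r m n" if "m \<in> {1..<n}" for m
  proof -
    have "(\<Sum>k = 1..<n. ?r m k * ?w k) = (\<Sum>k<n - 1. ?r (Suc (m - 1)) (Suc k) * weights E n $ k)"
      using that sum_shift_from_1[of "\<lambda>k. ?r m k * ?w k" n] by simp
    also have "\<dots> = ?r m n"
      using weights_equation[of "m - 1" n] that by (simp add: less_diff_conv2)
    finally show ?thesis .
  qed
  have "(\<Sum>k = 1..<n. ?w k * (\<Sum>m\<in>insert k (fair_set E k). a m))
      = (\<Sum>k = 1..<n. \<Sum>m = 1..<n. ?w k * (?r m k * a m))"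
    by (intro sum.cong refl) (simp add: ancestors_sum sum_distrib_left)
  also have "\<dots> = (\<Sum>m = 1..<n. a m * (\<Sum>k = 1..<n. ?r m k * ?w k))"
    by (subst sum.swap) (simp add: sum_distrib_left mult_ac)
  also have "\<dots> = (\<Sum>m = 1..<n. ?r m n * a m)"
    using column by (intro sum.cong) auto
  also have "\<dots> = (\<Sum>m\<in>fair_set E n. a m)"
  proof -
    have F_eq: "fair_set E n = {m \<in> {1..<n}. E\<^sup>*\<^sup>* m n}"
      by (auto simp: fair_set_reach)
    show ?thesis
      unfolding F_eq sum.inter_filter[OF finite_atLeastLessThan] by (intro sum.cong) simp_all
  qed
  finally show ?thesis .
qed

end

lemma normalize_cong:
  "(\<And>j. j < X \<Longrightarrow> f j = g j) \<Longrightarrow> i < X \<Longrightarrow> normalize X f i = normalize X g i"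
  unfolding normalize_def by simp

lemma normalize_scale: "c \<noteq> 0 \<Longrightarrow> normalize X (\<lambda>i. c * f i) = normalize X f"
  unfolding normalize_def by (rule ext) (simp add: sum_distrib_left[symmetric])

text \<open>Bayes updates may be normalised once, at the end.\<close>
lemma normalize_nested:
  assumes "(\<Sum>j<X. r j) \<noteq> 0"
  shows "normalize X (\<lambda>i. a i * normalize X r i) = normalize X (\<lambda>i. a i * r i)"
proof -
  have "normalize X (\<lambda>i. a i * normalize X r i)
      = normalize X (\<lambda>i. inverse (\<Sum>j<X. r j) * (a i * r i))"
    unfolding normalize_def[of X r] by (simp add: field_simps)
  also have "\<dots> = normalize X (\<lambda>i. a i * r i)"
    using assms by (intro normalize_scale) simp
  finally show ?thesis .
qed

section \<open>Sums over observation paths\<close>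

lemma sum_paths_Suc:
  fixes P :: "(nat \<Rightarrow> nat) \<Rightarrow> bool" and B :: "nat \<Rightarrow> nat \<Rightarrow> real"
  shows "(\<Sum>zs\<in>PiE {1..Suc N} (\<lambda>_. {..<Y}). if P zs then \<Prod>k = 1..Suc N. B i (zs k) else 0)
       = (\<Sum>zs\<in>PiE {1..N} (\<lambda>_. {..<Y}). \<Sum>y<Y.
            if P (zs(Suc N := y)) then (\<Prod>k = 1..N. B i (zs k)) * B i y else 0)"
proof -
  have ins: "{1..Suc N} = insert (Suc N) {1..N}" by auto
  have prod: "(\<Prod>k = 1..Suc N. B i ((zs(Suc N := y)) k)) = (\<Prod>k = 1..N. B i (zs k)) * B i y"
    for zs y unfolding ins by (simp add: mult.commute)
  let ?f = "\<lambda>zs. if P zs then \<Prod>k = 1..Suc N. B i (zs k) else 0"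
  have "(\<Sum>zs\<in>PiE {1..Suc N} (\<lambda>_. {..<Y}). ?f zs)
     = sum (?f \<circ> (\<lambda>(y, g). g(Suc N := y))) ({..<Y} \<times> PiE {1..N} (\<lambda>_. {..<Y}))"
    unfolding ins PiE_insert_eq by (rule sum.reindex[OF inj_combinator]) simp
  also have "\<dots> = (\<Sum>y<Y. \<Sum>zs\<in>PiE {1..N} (\<lambda>_. {..<Y}). ?f (zs(Suc N := y)))"
    by (simp add: sum.cartesian_product split_def comp_def)
  also have "\<dots> = (\<Sum>zs\<in>PiE {1..N} (\<lambda>_. {..<Y}). \<Sum>y<Y. ?f (zs(Suc N := y)))"
    by (rule sum.swap)
  finally show ?thesis by (simp only: prod)
qed

lemma cond_prob_eq_normalize:
  assumes "\<And>j. j < X \<Longrightarrow>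
      (\<Sum>zs\<in>PiE {1..N} (\<lambda>_. {..<Y}). if ev zs then pi0 j * (\<Prod>k = 1..N. B j (zs k)) else 0) = g j"
    and "i < X"
  shows "cond_prob X Y pi0 B N ev i = normalize X g i"
proof -
  have "(\<Sum>j<X. \<Sum>zs\<in>PiE {1..N} (\<lambda>_. {..<Y}).
            if ev zs then pi0 j * (\<Prod>k = 1..N. B j (zs k)) else 0) = (\<Sum>j<X. g j)"
    using assms(1) by (intro sum.cong) auto
  then show ?thesis
    unfolding cond_prob_def normalize_def using assms by simp
qed

lemma sum_if_mult: "(\<Sum>x\<in>A. if Q x then c * g x else 0) = c * (\<Sum>x\<in>A. if Q x then g x else (0::real))"
  by (auto simp: sum_distrib_left intro: sum.cong)

section \<open>The reputation model\<close>

locale reputation_model = increasing_dag E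
  for E :: "nat \<Rightarrow> nat \<Rightarrow> bool" +
  fixes X Y :: nat and pi0 :: "nat \<Rightarrow> real" and B :: "nat \<Rightarrow> nat \<Rightarrow> real"
    and act :: "(nat \<Rightarrow> real) \<Rightarrow> nat"
  assumes X_pos: "X \<ge> 1" and prior_pos: "\<And>i. i < X \<Longrightarrow> pi0 i > 0"
    and B_pos: "\<And>i y. i < X \<Longrightarrow> y < Y \<Longrightarrow> B i y > 0"
    and B_stoch: "\<And>i. i < X \<Longrightarrow> (\<Sum>y<Y. B i y) = 1"
begin

text \<open>Shorthands, along an observation path zs: the public beliefs [pi_1, ..., pi_n],
  the recommendation pi_{n-}, the action a_n, the public belief pi_n, and F_n.\<close>
abbreviation PS :: "(nat \<Rightarrow> nat) \<Rightarrow> nat \<Rightarrow> (nat \<Rightarrow> real) list" where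
  "PS zs n \<equiv> pubs X Y pi0 B act E zs n"
abbreviation PB :: "(nat \<Rightarrow> nat) \<Rightarrow> nat \<Rightarrow> nat \<Rightarrow> real" where
  "PB zs n \<equiv> prior_belief X Y pi0 B act E zs n"
abbreviation AC :: "(nat \<Rightarrow> nat) \<Rightarrow> nat \<Rightarrow> nat" where
  "AC zs n \<equiv> action X Y pi0 B act E zs n"
abbreviation PU :: "(nat \<Rightarrow> nat) \<Rightarrow> nat \<Rightarrow> nat \<Rightarrow> real" where
  "PU zs n \<equiv> public_belief X Y pi0 B act E zs n"
abbreviation F :: "nat \<Rightarrow> nat set" where
  "F n \<equiv> fair_set E n"

abbreviation act_lik :: "(nat \<Rightarrow> nat) \<Rightarrow> nat \<Rightarrow> nat \<Rightarrow> real" where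
  "act_lik zs m i \<equiv> act_prob X Y B act (PB zs m) (AC zs m) i"

text \<open>Joint likelihood of x = i and the actions of the nodes in S.\<close>
definition lik :: "(nat \<Rightarrow> nat) \<Rightarrow> nat set \<Rightarrow> nat \<Rightarrow> real" where
  "lik zs S i = pi0 i * (\<Prod>m\<in>S. act_lik zs m i)"

lemma finite_F: "finite (F n)"
  using fair_set_subset finite_subset by blast

lemma F_not_self: "n \<notin> F n"
  using fair_set_subset[of n] by auto

lemma pubs_length: "length (PS zs n) = n"
  by (induction n) (simp_all add: Let_def)

lemma pubs_nth: "k < n \<Longrightarrow> PS zs n ! k = PU zs (Suc k)"
  by (induction n) (auto simp: Let_def nth_append pubs_length public_belief_def less_Suc_eq)

lemma public_update: "1 \<le> m \<Longrightarrow> PU zs m = pub_update X Y B act (PB zs m) (AC zs m)"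
  by (cases m)
    (simp_all add: public_belief_def prior_belief_def action_def post_belief_def Let_def
      nth_append pubs_length)

lemma action_eq: "AC zs m = act (eta X B (PB zs m) (zs m))"
  by (simp add: action_def post_belief_def)

lemma pubs_causal: "(\<And>k. 1 \<le> k \<Longrightarrow> k \<le> n \<Longrightarrow> zs k = zs' k) \<Longrightarrow> PS zs n = PS zs' n"
  by (induction n) (simp_all add: Let_def)

lemma prior_causal: "(\<And>k. 1 \<le> k \<Longrightarrow> k < n \<Longrightarrow> zs k = zs' k) \<Longrightarrow> PB zs n = PB zs' n"
  unfolding prior_belief_def by (subst pubs_causal[of "n - 1" zs zs']) auto

lemma action_causal:
  "1 \<le> n \<Longrightarrow> (\<And>k. 1 \<le> k \<Longrightarrow> k \<le> n \<Longrightarrow> zs k = zs' k) \<Longrightarrow> AC zs n = AC zs' n"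
  unfolding action_eq using prior_causal[of n zs zs'] by auto

text \<open>The recommendation of node n depends on the past only through the actions of
  F_n, because the weights vanish outside F_n.\<close>
lemma prior_depends_on_fair_actions:
  "(\<And>k. k \<in> F n \<Longrightarrow> AC zs k = AC zs' k) \<Longrightarrow> PB zs n = PB zs' n"
proof (induction n rule: less_induct)
  case (less n)
  let ?term = "\<lambda>zs i m. weights E n $ (m - 1) * (ln ((PS zs (n - 1) ! (m - 1)) i) - ln (pi0 i))"
  have "(\<Sum>m = 1..<n. ?term zs i m) = (\<Sum>m = 1..<n. ?term zs' i m)" for i
  proof (rule sum.cong[OF refl])
    fix m assume m: "m \<in> {1..<n}"
    show "?term zs i m = ?term zs' i m"
    proof (cases "m \<in> F n")
      case True
      then have "PB zs m = PB zs' m"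
        using less.IH[of m] less.prems fair_set_closed[OF True] m by auto
      then show ?thesis
        using m less.prems True pubs_nth[of "m - 1" "n - 1"] public_update[of m] by auto
    next
      case False
      then have "weights E n $ (m - 1) = 0"
        using m by (intro weights_vanish) (auto simp: fair_set_reach)
      then show ?thesis by simp
    qed
  qed
  then show ?case
    unfolding prior_belief_def rec_belief_def by simp
qed

lemma lik_insert: "finite S \<Longrightarrow> k \<notin> S \<Longrightarrow> lik zs (insert k S) = (\<lambda>i. act_lik zs k i * lik zs S i)"
  unfolding lik_def by auto

text \<open>A path extended by
  the observation y agrees with ys on S iff it agreed before on S without N+1 and,
  when N+1 is in S, node N+1 (whose recommendation is then the one along ys) takes
  the action of ys on y.\<close>
lemma agreement_extend:
  assumes S: "S \<subseteq> {1..Suc N}" and closed: "\<forall>m\<in>S. F m \<subseteq> S"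
  shows "(\<forall>m\<in>S. AC (zs(Suc N := y)) m = AC ys m)
     \<longleftrightarrow> (\<forall>m\<in>S - {Suc N}. AC zs m = AC ys m)
         \<and> (Suc N \<in> S \<longrightarrow> act (eta X B (PB ys (Suc N)) y) = AC ys (Suc N))"
proof -
  have old: "AC (zs(Suc N := y)) m = AC zs m" if "m \<in> S - {Suc N}" for m
    using that S by (intro action_causal) auto
  have new: "AC (zs(Suc N := y)) (Suc N) = act (eta X B (PB ys (Suc N)) y)"
    if "Suc N \<in> S" "\<forall>m\<in>S - {Suc N}. AC zs m = AC ys m"
  proof -
    have "F (Suc N) \<subseteq> S - {Suc N}" using closed that(1) F_not_self by auto
    then have "PB zs (Suc N) = PB ys (Suc N)"
      using that(2) by (intro prior_depends_on_fair_actions) auto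
    moreover have "PB (zs(Suc N := y)) (Suc N) = PB zs (Suc N)"
      by (rule prior_causal) auto
    ultimately show ?thesis by (simp add: action_eq)
  qed
  have split: "(\<forall>m\<in>S. P m) \<longleftrightarrow> (\<forall>m\<in>S - {Suc N}. P m) \<and> (Suc N \<in> S \<longrightarrow> P (Suc N))"
    for P :: "nat \<Rightarrow> bool" by blast
  show ?thesis
    unfolding split[of "\<lambda>m. AC (zs(Suc N := y)) m = AC ys m"] using old new by auto
qed

lemma agreeing_paths_likelihood:
  assumes i: "i < X"
  shows "S \<subseteq> {1..N} \<Longrightarrow> \<forall>m\<in>S. F m \<subseteq> S \<Longrightarrow>
    (\<Sum>zs\<in>PiE {1..N} (\<lambda>_. {..<Y}). if \<forall>m\<in>S. AC zs m = AC ys m then \<Prod>k = 1..N. B i (zs k) else 0)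
      = (\<Prod>m\<in>S. act_lik ys m i)"
proof (induction N arbitrary: S)
  case 0
  then show ?case by simp
next
  case (Suc N)
  define S' where "S' = S - {Suc N}"
  have S': "S' \<subseteq> {1..N}" "\<forall>m\<in>S'. F m \<subseteq> S'"
    using Suc.prems fair_set_subset unfolding S'_def by fastforce+
  define c where "c = (if Suc N \<in> S then act_lik ys (Suc N) i else 1)"
  have last: "(\<Sum>y<Y. if Suc N \<in> S \<longrightarrow> act (eta X B (PB ys (Suc N)) y) = AC ys (Suc N)
      then B i y else 0) = c"
    unfolding c_def act_prob_def using B_stoch[OF i] by simp
  have inner: "(\<Sum>y<Y. if \<forall>m\<in>S. AC (zs(Suc N := y)) m = AC ys m
                      then (\<Prod>k = 1..N. B i (zs k)) * B i y else 0)
      = (if \<forall>m\<in>S'. AC zs m = AC ys m then \<Prod>k = 1..N. B i (zs k) else 0) * c" for zs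
  proof -
    define agree where "agree \<longleftrightarrow> (\<forall>m\<in>S'. AC zs m = AC ys m)"
    show ?thesis
      unfolding agreement_extend[OF Suc.prems] S'_def[symmetric] agree_def[symmetric]
      by (cases agree) (simp_all add: sum_if_mult last)
  qed
  have "(\<Sum>zs\<in>PiE {1..Suc N} (\<lambda>_. {..<Y}).
           if \<forall>m\<in>S. AC zs m = AC ys m then \<Prod>k = 1..Suc N. B i (zs k) else 0)
      = (\<Sum>zs\<in>PiE {1..N} (\<lambda>_. {..<Y}).
           (if \<forall>m\<in>S'. AC zs m = AC ys m then \<Prod>k = 1..N. B i (zs k) else 0) * c)"
    by (subst sum_paths_Suc) (simp only: inner)
  also have "\<dots> = (\<Prod>m\<in>S'. act_lik ys m i) * c"
    by (simp only: sum_distrib_right[symmetric] Suc.IH[OF S'])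
  also have "\<dots> = (\<Prod>m\<in>S. act_lik ys m i)"
    using finite_subset[OF Suc.prems(1)] unfolding c_def S'_def
    by (auto simp: prod.remove mult.commute)
  finally show ?case .
qed

lemma joint_agreeing_actions:
  assumes "j < X" and "S \<subseteq> {1..N}" and "\<forall>m\<in>S. F m \<subseteq> S"
  shows "(\<Sum>zs\<in>PiE {1..N} (\<lambda>_. {..<Y}).
            if \<forall>m\<in>S. AC zs m = AC ys m then pi0 j * (\<Prod>k = 1..N. B j (zs k)) else 0)
         = lik ys S j"
  unfolding sum_if_mult agreeing_paths_likelihood[OF assms] lik_def ..

end

locale reputation_path = reputation_model +
  fixes ys :: "nat \<Rightarrow> nat"
  assumes ys_range: "\<And>k. ys k < Y"
begin

text \<open>Positivity of B and of the prior makes every likelihood along ys positive, so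
  all logarithms below are defined.\<close>
lemma act_lik_pos: "i < X \<Longrightarrow> act_lik ys k i > 0"
  unfolding action_eq act_prob_def
  by (rule sum_pos2[of _ "ys k"]) (auto intro: less_imp_le B_pos ys_range)

lemma lik_pos: "finite S \<Longrightarrow> i < X \<Longrightarrow> lik ys S i > 0"
  unfolding lik_def using prior_pos act_lik_pos by (simp add: prod_pos)

lemma lik_sum_pos: "finite S \<Longrightarrow> (\<Sum>j<X. lik ys S j) > 0"
  using lik_pos X_pos by (intro sum_pos) (auto simp: lessThan_empty_iff)

lemma public_from_prior:
  assumes k: "1 \<le> k" and j: "j < X"
    and prior: "\<And>j. j < X \<Longrightarrow> PB ys k j = normalize X (lik ys (F k)) j"
  shows "PU ys k j = normalize X (lik ys (insert k (F k))) j"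
proof -
  have "PU ys k j = normalize X (\<lambda>j. act_lik ys k j * PB ys k j) j"
    using public_update[OF k] by (simp add: pub_update_def)
  also have "\<dots> = normalize X (\<lambda>j. act_lik ys k j * normalize X (lik ys (F k)) j) j"
    using prior j by (intro normalize_cong) auto
  also have "\<dots> = normalize X (lik ys (insert k (F k))) j"
    using lik_sum_pos[OF finite_F, of k]
    by (simp add: normalize_nested lik_insert[OF finite_F F_not_self])
  finally show ?thesis .
qed

lemma log_normalized_lik:
  assumes S: "finite S" and j: "j < X"
  shows "ln (normalize X (lik ys S) j) - ln (pi0 j)
           = (\<Sum>m\<in>S. ln (act_lik ys m j)) - ln (\<Sum>j'<X. lik ys S j')"
proof -
  have pos: "\<And>m. act_lik ys m j > 0" using act_lik_pos[OF j] .
  have "ln (lik ys S j) = ln (pi0 j) + (\<Sum>m\<in>S. ln (act_lik ys m j))"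
    unfolding lik_def using prior_pos[OF j] pos S
    by (simp add: ln_mult prod_pos ln_prod less_imp_neq[symmetric])
  then show ?thesis
    using lik_pos[OF S j] lik_sum_pos[OF S] by (simp add: normalize_def ln_div)
qed

text \<open>Inductively the earlier public beliefs are
  normalised likelihoods of their closed ancestor sets; in log form the weights count
  each node of F_n exactly once, and the normalising constants drop out.\<close>
lemma prior_eq_normalized_lik:
  "1 \<le> n \<Longrightarrow> i < X \<Longrightarrow> PB ys n i = normalize X (lik ys (F n)) i"
proof (induction n arbitrary: i rule: less_induct)
  case (less n)
  define w where "w k = weights E n $ (k - 1)" for k
  define Z where "Z k = (\<Sum>j<X. lik ys (insert k (F k)) j)" for k
  define C where "C = (\<Sum>k = 1..<n. w k * ln (Z k))"
  have log_public: "ln ((PS ys (n - 1) ! (k - 1)) j) - ln (pi0 j)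
      = (\<Sum>m\<in>insert k (F k). ln (act_lik ys m j)) - ln (Z k)"
    if k: "k \<in> {1..<n}" and j: "j < X" for k j
  proof -
    have "PS ys (n - 1) ! (k - 1) = PU ys k"
      using k pubs_nth[of "k - 1" "n - 1"] by auto
    then have "(PS ys (n - 1) ! (k - 1)) j = normalize X (lik ys (insert k (F k))) j"
      using k j less.IH[of k] by (auto intro: public_from_prior)
    then show ?thesis
      unfolding Z_def using log_normalized_lik[OF _ j] finite_F by simp
  qed
  have exponent: "(\<Sum>k = 1..<n. w k * (ln ((PS ys (n - 1) ! (k - 1)) j) - ln (pi0 j)))
      = (\<Sum>m\<in>F n. ln (act_lik ys m j)) - C" if j: "j < X" for j
  proof -
    have "(\<Sum>k = 1..<n. w k * (ln ((PS ys (n - 1) ! (k - 1)) j) - ln (pi0 j)))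
        = (\<Sum>k = 1..<n. w k * (\<Sum>m\<in>insert k (F k). ln (act_lik ys m j)) - w k * ln (Z k))"
      by (rule sum.cong[OF refl], subst log_public[OF _ j]) (simp_all add: right_diff_distrib)
    also have "\<dots> = (\<Sum>k = 1..<n. w k * (\<Sum>m\<in>insert k (F k). ln (act_lik ys m j))) - C"
      unfolding C_def by (simp add: sum_subtractf)
    finally show ?thesis
      unfolding w_def using weights_count_fair_set_once by simp
  qed
  have "PB ys n i = normalize X (\<lambda>j. pi0 j *
      exp (\<Sum>k = 1..<n. w k * (ln ((PS ys (n - 1) ! (k - 1)) j) - ln (pi0 j)))) i"
    by (simp add: prior_belief_def rec_belief_def w_def)
  also have "\<dots> = normalize X (\<lambda>j. exp (- C) * lik ys (F n) j) i"
  proof (rule normalize_cong[OF _ less.prems(2)])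
    fix j assume j: "j < X"
    have "exp (\<Sum>m\<in>F n. ln (act_lik ys m j)) = (\<Prod>m\<in>F n. act_lik ys m j)"
      using act_lik_pos[OF j] finite_F by (simp add: exp_sum)
    then show "pi0 j * exp (\<Sum>k = 1..<n. w k * (ln ((PS ys (n - 1) ! (k - 1)) j) - ln (pi0 j)))
        = exp (- C) * lik ys (F n) j"
      unfolding exponent[OF j] lik_def by (simp add: exp_diff exp_minus field_simps)
  qed
  also have "\<dots> = normalize X (lik ys (F n)) i"
    by (simp add: normalize_scale)
  finally show ?case .
qed

lemma prior_is_fair:
  assumes n: "1 \<le> n" and i: "i < X"
  shows "PB ys n i = cond_prob X Y pi0 B (n - 1) (\<lambda>zs. \<forall>m\<in>F n. AC zs m = AC ys m) i"
proof -
  have "F n \<subseteq> {1..n - 1}" "\<forall>m\<in>F n. F m \<subseteq> F n"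
    using fair_set_subset fair_set_closed by fastforce+
  then show ?thesis
    using prior_eq_normalized_lik[OF n i] joint_agreeing_actions
    by (simp add: cond_prob_eq_normalize[OF _ i])
qed

lemma post_is_fair:
  assumes n: "1 \<le> n" and i: "i < X"
  shows "post_belief X Y pi0 B act E ys n i
           = cond_prob X Y pi0 B n (\<lambda>zs. (\<forall>m\<in>F n. AC zs m = AC ys m) \<and> zs n = ys n) i"
proof -
  obtain N where N: "n = Suc N" using n by (cases n) auto
  have F: "F n \<subseteq> {1..N}" "\<forall>m\<in>F n. F m \<subseteq> F n"
    using N fair_set_subset fair_set_closed by fastforce+
  have agree: "(\<forall>m\<in>F n. AC (zs(n := y)) m = AC ys m) \<longleftrightarrow> (\<forall>m\<in>F n. AC zs m = AC ys m)" for zs y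
  proof -
    have "F n \<subseteq> {1..Suc N}" using F(1) by auto
    from agreement_extend[OF this[unfolded N] F(2)[unfolded N], of zs y]
    show ?thesis using F_not_self[of n] N by simp
  qed
  have inner: "(\<Sum>y<Y. if (\<forall>m\<in>F n. AC (zs(n := y)) m = AC ys m) \<and> (zs(n := y)) n = ys n
                 then (\<Prod>k = 1..N. B j (zs k)) * B j y else 0)
      = (if \<forall>m\<in>F n. AC zs m = AC ys m then \<Prod>k = 1..N. B j (zs k) else 0) * B j (ys n)" for zs j
  proof -
    define agree where "agree \<longleftrightarrow> (\<forall>m\<in>F n. AC zs m = AC ys m)"
    have "(\<Sum>y<Y. if agree \<and> y = ys n then (\<Prod>k = 1..N. B j (zs k)) * B j y else 0)
        = (if agree then \<Prod>k = 1..N. B j (zs k) else 0) * B j (ys n)"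
      using ys_range[of n] by (cases agree) (simp_all add: sum.delta)
    then show ?thesis unfolding agree_def agree by simp
  qed
  have joint: "(\<Sum>zs\<in>PiE {1..n} (\<lambda>_. {..<Y}). if (\<forall>m\<in>F n. AC zs m = AC ys m) \<and> zs n = ys n
      then pi0 j * (\<Prod>k = 1..n. B j (zs k)) else 0) = B j (ys n) * lik ys (F n) j"
    if j: "j < X" for j
  proof -
    have "(\<Sum>zs\<in>PiE {1..n} (\<lambda>_. {..<Y}). if (\<forall>m\<in>F n. AC zs m = AC ys m) \<and> zs n = ys n
            then \<Prod>k = 1..n. B j (zs k) else 0)
        = (\<Sum>zs\<in>PiE {1..N} (\<lambda>_. {..<Y}).
            (if \<forall>m\<in>F n. AC zs m = AC ys m then \<Prod>k = 1..N. B j (zs k) else 0) * B j (ys n))"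
      unfolding N by (subst sum_paths_Suc) (simp only: N[symmetric] inner)
    then show ?thesis
      unfolding sum_if_mult sum_distrib_right[symmetric] agreeing_paths_likelihood[OF j F] lik_def
      by simp
  qed
  have "post_belief X Y pi0 B act E ys n i = normalize X (\<lambda>j. B j (ys n) * PB ys n j) i"
    by (simp add: post_belief_def eta_def)
  also have "\<dots> = normalize X (\<lambda>j. B j (ys n) * normalize X (lik ys (F n)) j) i"
    using prior_eq_normalized_lik[OF n] i by (intro normalize_cong) auto
  also have "\<dots> = normalize X (\<lambda>j. B j (ys n) * lik ys (F n) j) i"
    using lik_sum_pos[OF finite_F, of n] by (simp add: normalize_nested)
  finally show ?thesis
    using joint by (simp add: cond_prob_eq_normalize[OF _ i])
qed

lemma public_is_fair:
  assumes n: "1 \<le> n" and i: "i < X"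
  shows "PU ys n i
           = cond_prob X Y pi0 B n (\<lambda>zs. (\<forall>m\<in>F n. AC zs m = AC ys m) \<and> AC zs n = AC ys n) i"
proof -
  have S: "insert n (F n) \<subseteq> {1..n}" "\<forall>m\<in>insert n (F n). F m \<subseteq> insert n (F n)"
    using n fair_set_subset fair_set_closed by fastforce+
  have ev: "((\<forall>m\<in>F n. AC zs m = AC ys m) \<and> AC zs n = AC ys n)
      = (\<forall>m\<in>insert n (F n). AC zs m = AC ys m)" for zs
    by auto
  show ?thesis
    using public_from_prior[OF n i prior_eq_normalized_lik[OF n]] joint_agreeing_actions[OF _ S]
    unfolding ev by (simp add: cond_prob_eq_normalize[OF _ i])
qed

end

theorem theorem2:
  fixes X Y A :: nat and pi0 :: "nat \<Rightarrow> real" and B :: "nat \<Rightarrow> nat \<Rightarrow> real"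
    and c :: "nat \<Rightarrow> nat \<Rightarrow> real" and act :: "(nat \<Rightarrow> real) \<Rightarrow> nat"
    and E :: "nat \<Rightarrow> nat \<Rightarrow> bool" and ys :: "nat \<Rightarrow> nat"
  assumes X_pos: "X \<ge> 1" and Y_pos: "Y \<ge> 1" and A_pos: "A \<ge> 1"
    and prior_pos: "\<And>i. i < X \<Longrightarrow> pi0 i > 0"
    and prior_sum: "(\<Sum>i<X. pi0 i) = 1"
    and B_pos: "\<And>i y. i < X \<Longrightarrow> y < Y \<Longrightarrow> B i y > 0"
    and B_stoch: "\<And>i. i < X \<Longrightarrow> (\<Sum>y<Y. B i y) = 1"
    and act_argmin: "\<And>\<eta>. act \<eta> < A \<and>
        (\<forall>a<A. (\<Sum>i<X. c (act \<eta>) i * \<eta> i) \<le> (\<Sum>i<X. c a i * \<eta> i))"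
    and E_dag: "\<And>m n. E m n \<Longrightarrow> m < n"
    and ys_range: "\<And>k. ys k < Y"
    and n_pos: "n \<ge> 1" and i_lt: "i < X"
  shows "prior_belief X Y pi0 B act E ys n i =
           cond_prob X Y pi0 B (n - 1)
             (\<lambda>zs. \<forall>m \<in> fair_set E n. action X Y pi0 B act E zs m = action X Y pi0 B act E ys m) i
       \<and> post_belief X Y pi0 B act E ys n i =
           cond_prob X Y pi0 B n
             (\<lambda>zs. (\<forall>m \<in> fair_set E n. action X Y pi0 B act E zs m = action X Y pi0 B act E ys m)
                   \<and> zs n = ys n) i
       \<and> public_belief X Y pi0 B act E ys n i =
           cond_prob X Y pi0 B n
             (\<lambda>zs. (\<forall>m \<in> fair_set E n. action X Y pi0 B act E zs m = action X Y pi0 B act E ys m)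
                   \<and> action X Y pi0 B act E zs n = action X Y pi0 B act E ys n) i"
proof -
  interpret reputation_path E X Y pi0 B act ys
    using X_pos prior_pos B_pos B_stoch E_dag ys_range by unfold_locales
  show ?thesis
    using prior_is_fair post_is_fair public_is_fair n_pos i_lt by blast
qed

end
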